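(* Assume (H-tree) and (H-brw) with some $q>4$, and fix $q'\in(4,q)$. There exist $C'>0$ and $m_0\ge1$ (depending on $q'$, $\mu$, $\theta$) such that for all $m\ge m_0$ and $\eta\in(0,1)$, \[ \mathbf P_0\Big(\max_{x\in\mathscr R^{(m)}_{\mathcal X}}\mathrm d\big(x,\mathscr R^{(m)}_{\mathcal Y}\big)\ge\eta m^{1/4}\Big)\le C'\eta^{-q'}m^{1-q'/4}(\log m)^{q'/2}, \] where $\mathscr R^{(m)}_{\mathcal X}=\{V(v):v\in\mathcal X\}\cap\widehat V_-[0,m]$ and $\mathscr R^{(m)}_{\mathcal Y}=\{V(v):v\in\mathcal Y\}\cap\widehat V_-[0,m]$.
   Context: (H-tree): $\mu$ is a probability distribution on $\mathbb N$ with mean $1$ and variance $\sigma^2\in(0,\infty)$. (H-brw) with exponent $q$: $\theta$ is a symmetric, irreducible probability distribution on $\mathbb Z^d$ with covariance $M_\theta$ and $\theta(\{y:|y|\ge r\})\le c\,r^{-q}$ for all $r>0$. Invariant tree: take an infinite spine $\mathcal X=\{\varnothing_0=\varnothing,\varnothing_1,\varnothing_2,\dots\}$ with edges $\{\varnothing_n,\varnothing_{n+1}\}$. Independently, for each $n\ge1$, with probability $\mu(i+j+1)$ the vertex $\varnothing_n$ receives $i$ extra children on the left and $j$ on the right of the spine, each the root of an independent Galton–Watson($\mu$) tree; let $\mathcal T^g_n$ be the planar tree rooted at $\varnothing_n$ formed by $\varnothing_n$ and its left extra children with their descendants, $\mathcal T^g_0=\{\varnothing_0\}$. The tree $\widehat{\mathcal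 T}_-$ is the union of the spine and the $\mathcal T^g_n$, enumerated as $\varnothing_0$, $\varnothing_1$, the vertices of $\mathcal T^g_1\setminus\{\varnothing_1\}$ in depth-first order, $\varnothing_2$, the vertices of $\mathcal T^g_2\setminus\{\varnothing_2\}$ in depth-first order, etc. $\mathcal Y=\widehat{\mathcal T}_-\setminus\{\varnothing_1,\varnothing_2,\dots\}$. Assign to each edge an independent $\theta$ displacement, $V(\varnothing)=x$, $V(u)=x+$ sum of displacements along the path from $\varnothing$ to $u$ ($\mathbf P_x$ its law); $\widehat V_-(i)=V(\widehat{\mathcal T}_-(i))$ and $\widehat V_-[0,m]=\{\widehat V_-(0),\dots,\widehat V_-(m)\}$. *)

theory Defs
  imports "HOL-Probability.Probability"
begin

definition rv :: "int ^ 'd \<Rightarrow> real ^ 'd" where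
  "rv z = (\<chi> i. real_of_int (z $ i))"

definition brw_irreducible :: "(int ^ 'd) pmf \<Rightarrow> bool" where
  "brw_irreducible \<theta> \<longleftrightarrow> (\<forall>z. \<exists>xs. set xs \<subseteq> set_pmf \<theta> \<and> sum_list xs = z)"

text \<open>Law of (number of left extra children, number of right extra children) of a
  spine vertex: P(i,j) = mu(i+j+1) (a probability law since mu has mean 1).\<close>
definition spine_pmf :: "nat pmf \<Rightarrow> (nat \<times> nat) pmf" where
  "spine_pmf \<mu> = embed_pmf (\<lambda>p. pmf \<mu> (fst p + snd p + 1))"

text \<open>Sample point: for each spine index n, (left/right children counts of spine vertex n,
  displacement of the spine edge between vertex n-1 and vertex n); for each
  Ulam--Harris label (n,w) (w nonempty, a vertex of the tree hanging to the left of spine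
  vertex n), (number of children, displacement of the edge to its parent).
  Unused coordinates are independent dummies.\<close>
type_synonym 'd bt_omega =
  "(nat \<Rightarrow> (nat \<times> nat) \<times> (int ^ 'd)) \<times> (nat \<times> nat list \<Rightarrow> nat \<times> (int ^ 'd))"

definition bt_space :: "nat pmf \<Rightarrow> (int ^ 'd) pmf \<Rightarrow> 'd bt_omega measure" where
  "bt_space \<mu> \<theta> =
     (\<Pi>\<^sub>M n\<in>UNIV. measure_pmf (pair_pmf (spine_pmf \<mu>) \<theta>))
     \<Otimes>\<^sub>M (\<Pi>\<^sub>M v\<in>UNIV. measure_pmf (pair_pmf \<mu> \<theta>))"

definition Lc :: "'d bt_omega \<Rightarrow> nat \<Rightarrow> nat" where
  "Lc \<omega> n = fst (fst (fst \<omega> n))"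

definition xi :: "'d bt_omega \<Rightarrow> nat \<Rightarrow> nat list \<Rightarrow> nat" where
  "xi \<omega> n w = fst (snd \<omega> (n, w))"

definition Dsp :: "'d bt_omega \<Rightarrow> nat \<Rightarrow> int ^ 'd" where
  "Dsp \<omega> n = snd (fst \<omega> n)"

definition Dtr :: "'d bt_omega \<Rightarrow> nat \<Rightarrow> nat list \<Rightarrow> int ^ 'd" where
  "Dtr \<omega> n w = snd (snd \<omega> (n, w))"

text \<open>Vertices: Sp n is the spine vertex n (Sp 0 is the root); Sb n w (w nonempty) is the
  vertex of T^g_n with Ulam--Harris label w below the spine vertex n.\<close>
datatype vtx = Sp nat | Sb nat "nat list"

definition in_sub :: "'d bt_omega \<Rightarrow> nat \<Rightarrow> nat list \<Rightarrow> bool" where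
  "in_sub \<omega> n w \<longleftrightarrow> 1 \<le> n \<and> w \<noteq> [] \<and> hd w < Lc \<omega> n \<and>
     (\<forall>j. 1 \<le> j \<and> j < length w \<longrightarrow> w ! j < xi \<omega> n (take j w))"

definition verts :: "'d bt_omega \<Rightarrow> vtx set" where
  "verts \<omega> = range Sp \<union> {Sb n w | n w. in_sub \<omega> n w}"

definition Yset :: "'d bt_omega \<Rightarrow> vtx set" where
  "Yset \<omega> = verts \<omega> - {Sp n | n. 1 \<le> n}"

text \<open>Exploration order: Sp 0, Sp 1, T^g_1 minus its root in depth-first (= lexicographic
  Ulam--Harris) order, Sp 2, ...\<close>
fun vless :: "vtx \<Rightarrow> vtx \<Rightarrow> bool" where
  "vless (Sp a) (Sp b) = (a < b)"
| "vless (Sp a) (Sb b w) = (a \<le> b)"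
| "vless (Sb a w) (Sp b) = (a < b)"
| "vless (Sb a w) (Sb b w') = (a < b \<or> (a = b \<and> (w, w') \<in> lexord {(x, y). x < y}))"

definition rank :: "'d bt_omega \<Rightarrow> vtx \<Rightarrow> nat" where
  "rank \<omega> v = card {u \<in> verts \<omega>. vless u v}"

fun pos :: "int ^ 'd \<Rightarrow> 'd bt_omega \<Rightarrow> vtx \<Rightarrow> int ^ 'd" where
  "pos x \<omega> (Sp n) = x + (\<Sum>k\<in>{1..n}. Dsp \<omega> k)"
| "pos x \<omega> (Sb n w) = x + (\<Sum>k\<in>{1..n}. Dsp \<omega> k) + (\<Sum>j\<in>{1..length w}. Dtr \<omega> n (take j w))"

text \<open>hat V_-[0,m]: positions of the first m+1 explored vertices.\<close>
definition visited :: "int ^ 'd \<Rightarrow> 'd bt_omega \<Rightarrow> nat \<Rightarrow> (int ^ 'd) set" where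
  "visited x \<omega> m = pos x \<omega> ` {v \<in> verts \<omega>. rank \<omega> v \<le> m}"

definition RX :: "int ^ 'd \<Rightarrow> 'd bt_omega \<Rightarrow> nat \<Rightarrow> (int ^ 'd) set" where
  "RX x \<omega> m = pos x \<omega> ` range Sp \<inter> visited x \<omega> m"

definition RY :: "int ^ 'd \<Rightarrow> 'd bt_omega \<Rightarrow> nat \<Rightarrow> (int ^ 'd) set" where
  "RY x \<omega> m = pos x \<omega> ` Yset \<omega> \<inter> visited x \<omega> m"

end

theory Submission
  imports Defs "HOL-Real_Asymp.Real_Asymp"
begin

text \<open>Every explored vertex off the spine belongs to \<open>\<Y>\<close>, so only the spine vertices
  \<open>Sp n\<close>, \<open>n \<le> m\<close>, can be far from \<open>\<R>\<^sub>\<Y>\<close>. Look \<open>L \<approx> A log m\<close> spine steps below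
  \<open>Sp n\<close>: either none of these spine vertices has a left child, which has probability at most
  \<open>(1 - \<mu>(K))\<^sup>L\<close> for a \<open>K \<ge> 2\<close> with \<open>\<mu>(K) > 0\<close>, or the first left child of the highest one is a
  vertex of \<open>\<Y>\<close> explored before \<open>Sp n\<close> and at most \<open>L + 1\<close> jumps away from it. A jump exceeds
  \<open>t / (L + 1)\<close> with probability \<open>O((L / t)\<^sup>q)\<close>, and a union bound over the \<open>m\<close> spine vertices
  and their \<open>2L + 1\<close> relevant jumps gives the rate for every \<open>q' < q\<close>. The exploration order
  enumerates the vertices because the critical Galton--Watson trees hanging off the spine are
  almost surely finite.\<close>

section \<open>The offspring law\<close>

lemma nn_integral_spine_weights:
  fixes \<mu> :: "nat pmf"
  assumes mean: "measure_pmf.expectation \<mu> real = 1"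
  shows "(\<integral>\<^sup>+p. ennreal (pmf \<mu> (fst p + snd p + 1)) \<partial>count_space UNIV) = 1"
proof -
  have int: "integrable (measure_pmf \<mu>) real"
    using mean not_integrable_integral_eq by fastforce
  have bij: "bij_betw (\<lambda>(i,j). (i, i+j+1)) (UNIV::(nat\<times>nat) set) {(i,k). i < k}"
    by (rule bij_betwI[where g="\<lambda>(i,k). (i, k - i - 1)"]) auto
  have "(\<integral>\<^sup>+p. ennreal (pmf \<mu> (fst p + snd p + 1)) \<partial>count_space UNIV)
      = (\<integral>\<^sup>+p. ennreal (pmf \<mu> (snd ((\<lambda>(i,j). (i, i+j+1)) p))) \<partial>count_space UNIV)"
    by (intro nn_integral_cong) (auto simp: split_beta)
  also have "\<dots> = (\<integral>\<^sup>+p. ennreal (pmf \<mu> (snd p)) \<partial>count_space {(i,k). i < k})"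
    by (rule nn_integral_bij_count_space[OF bij])
  also have "\<dots> = (\<integral>\<^sup>+p. ennreal (pmf \<mu> (snd p)) * indicator {(i,k). i < k} p \<partial>count_space UNIV)"
    by (simp add: nn_integral_count_space_indicator)
  also have "\<dots> = (\<integral>\<^sup>+ k. \<integral>\<^sup>+ i. ennreal (pmf \<mu> k) * indicator {..<k} i \<partial>count_space UNIV \<partial>count_space UNIV)"
    by (subst nn_integral_snd_count_space[symmetric])
       (auto intro!: nn_integral_cong simp: indicator_def)
  also have "\<dots> = (\<integral>\<^sup>+ k. ennreal (real k) \<partial>measure_pmf \<mu>)"
    by (simp add: nn_integral_cmult nn_integral_measure_pmf ennreal_of_nat_eq_real_of_nat mult.commute)
  also have "\<dots> = ennreal (measure_pmf.expectation \<mu> real)"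
    by (rule nn_integral_eq_integral[OF int]) auto
  finally show ?thesis using mean by simp
qed

lemma pmf_spine_pmf:
  assumes "measure_pmf.expectation \<mu> real = 1"
  shows "pmf (spine_pmf \<mu>) p = pmf \<mu> (fst p + snd p + 1)"
  unfolding spine_pmf_def
  by (rule pmf_embed_pmf, simp, rule nn_integral_spine_weights[OF assms])

lemma power_diff_le_mult_diff:
  fixes x y :: real
  assumes "0 \<le> x" "x \<le> y" "y \<le> 1"
  shows "y ^ k - x ^ k \<le> real k * (y - x)"
proof (induction k)
  case 0 then show ?case by simp
next
  case (Suc k)
  have "y ^ Suc k - x ^ Suc k = y * (y ^ k - x ^ k) + x ^ k * (y - x)"
    by (simp add: algebra_simps)
  also have "\<dots> \<le> 1 * (real k * (y - x)) + 1 * (y - x)"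
  proof (rule add_mono)
    have "y ^ k - x ^ k \<ge> 0" using assms by (simp add: power_mono)
    then show "y * (y ^ k - x ^ k) \<le> 1 * (real k * (y - x))"
      using Suc assms by (intro mult_mono) auto
    show "x ^ k * (y - x) \<le> 1 * (y - x)"
      using assms by (intro mult_right_mono) (auto simp: power_le_one)
  qed
  finally show ?case by (simp add: algebra_simps)
qed

lemma one_minus_power_less_mult:
  fixes y :: real
  assumes "0 \<le> y" "y < 1" "2 \<le> k"
  shows "1 - y ^ k < real k * (1 - y)"
proof -
  obtain j where k: "k = Suc (Suc j)" using assms(3) by (metis add_2_eq_Suc le_Suc_ex)
  have "1 - y ^ Suc j \<le> real (Suc j) * (1 - y)"
    using power_diff_le_mult_diff[of y 1 "Suc j"] assms by simp
  moreover have "y ^ Suc j * (1 - y) < 1 * (1 - y)"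
  proof (rule mult_strict_right_mono)
    have "y ^ Suc j \<le> y" using assms by (simp add: power_le_one mult_left_le)
    then show "y ^ Suc j < 1" using assms by simp
  qed (use assms in simp)
  moreover have "1 - y ^ k = (1 - y ^ Suc j) + y ^ Suc j * (1 - y)"
    by (simp add: k algebra_simps)
  ultimately show ?thesis by (simp add: k algebra_simps)
qed

lemma pmf_mult_le_expectation:
  fixes g :: "'a \<Rightarrow> real"
  assumes "integrable (measure_pmf p) g" "\<And>x. 0 \<le> g x"
  shows "pmf p a * g a \<le> measure_pmf.expectation p g"
proof -
  have "integrable (measure_pmf p) (\<lambda>x. g a * indicator {a} x)"
    by (rule measure_pmf.integrable_const_bound[where B="\<bar>g a\<bar>"]) (auto simp: indicator_def)
  then have "measure_pmf.expectation p (\<lambda>x. g a * indicator {a} x) \<le> measure_pmf.expectation p g"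
    using assms by (intro integral_mono) (auto simp: indicator_def)
  then show ?thesis by (simp add: measure_pmf_single mult.commute)
qed

locale critical_offspring =
  fixes \<mu> :: "nat pmf"
  assumes mean: "measure_pmf.expectation \<mu> real = 1"
    and variance_pos: "measure_pmf.variance \<mu> real > 0"
begin

lemma integrable_real: "integrable (measure_pmf \<mu>) real"
  using mean not_integrable_integral_eq by fastforce

text \<open>Mean 1 and offspring numbers in \<open>{0, 1}\<close> would force \<open>\<mu> = \<delta>\<^sub>1\<close>, of variance 0.\<close>
lemma exists_pmf_pos_ge_2: "\<exists>K\<ge>2. pmf \<mu> K > 0"
proof (rule ccontr)
  assume "\<not> (\<exists>K\<ge>2. pmf \<mu> K > 0)"
  have small: "x \<le> 1" if "x \<in> set_pmf \<mu>" for x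
  proof (rule ccontr)
    assume "\<not> x \<le> 1"
    then have "\<not> pmf \<mu> x > 0" using \<open>\<not> (\<exists>K\<ge>2. pmf \<mu> K > 0)\<close> by simp
    then show False using that pmf_nonneg[of \<mu> x] by (simp add: set_pmf_iff)
  qed
  have "AE x in measure_pmf \<mu>. (real x - measure_pmf.expectation \<mu> real)^2 = 1 - real x"
    unfolding AE_measure_pmf_iff
  proof
    fix x assume "x \<in> set_pmf \<mu>"
    then have "x = 0 \<or> x = 1" using small by fastforce
    then show "(real x - measure_pmf.expectation \<mu> real)^2 = 1 - real x" by (auto simp: mean)
  qed
  then have "measure_pmf.variance \<mu> real = measure_pmf.expectation \<mu> (\<lambda>x. 1 - real x)"
    by (intro integral_cong_AE) auto
  also have "\<dots> = 0" using integrable_real mean by (simp add: Bochner_Integration.integral_diff)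
  finally show False using variance_pos by simp
qed

definition pgf :: "real \<Rightarrow> real" where
  "pgf y = measure_pmf.expectation \<mu> (\<lambda>k. y ^ k)"

lemma integrable_power: "0 \<le> (y::real) \<Longrightarrow> y \<le> 1 \<Longrightarrow> integrable (measure_pmf \<mu>) (\<lambda>k. y ^ k)"
  by (rule measure_pmf.integrable_const_bound[where B=1], rule AE_I2) (auto simp: power_le_one)

lemma pgf_bounds: "0 \<le> y \<Longrightarrow> y \<le> 1 \<Longrightarrow> 0 \<le> pgf y \<and> pgf y \<le> 1"
  unfolding pgf_def
  by (auto intro!: integral_nonneg measure_pmf.integral_le_const integrable_power simp: power_le_one)

lemma pgf_diff_le:
  assumes "0 \<le> x" "x \<le> y" "y \<le> 1"
  shows "pgf y - pgf x \<le> y - x"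
proof -
  have "pgf y - pgf x = measure_pmf.expectation \<mu> (\<lambda>k. y ^ k - x ^ k)"
    unfolding pgf_def using assms
    by (subst Bochner_Integration.integral_diff) (auto intro!: integrable_power)
  also have "\<dots> \<le> measure_pmf.expectation \<mu> (\<lambda>k. real k * (y - x))"
    using assms
    by (intro integral_mono integrable_real integrable_power Bochner_Integration.integrable_diff
          integrable_mult_left power_diff_le_mult_diff) auto
  also have "\<dots> = y - x" using mean by simp
  finally show ?thesis .
qed

lemma pgf_gt:
  assumes "0 \<le> y" "y < 1"
  shows "pgf y > y"
proof -
  obtain K where K: "K \<ge> 2" "pmf \<mu> K > 0" using exists_pmf_pos_ge_2 by auto
  let ?g = "\<lambda>k. y ^ k - 1 + real k * (1 - y)"
  have "integrable (measure_pmf \<mu>) ?g"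
    using assms by (intro Bochner_Integration.integrable_diff Bochner_Integration.integrable_add
        integrable_power integrable_mult_left integrable_real) auto
  moreover have "0 \<le> ?g k" for k using power_diff_le_mult_diff[of y 1] assms by (simp add: algebra_simps)
  moreover have "0 < pmf \<mu> K * ?g K"
    using K one_minus_power_less_mult[of y K] assms by (intro mult_pos_pos) auto
  ultimately have "0 < measure_pmf.expectation \<mu> ?g"
    using pmf_mult_le_expectation by (metis (no_types, lifting) order_less_le_trans)
  also have "measure_pmf.expectation \<mu> ?g = pgf y - 1 + (1 - y)"
    unfolding pgf_def using assms mean
    by (simp add: Bochner_Integration.integral_add Bochner_Integration.integral_diff
        integrable_power integrable_real)
  finally show ?thesis by simp
qed

text \<open>Extinction of the critical tree: \<open>s \<mapsto> 1 - pgf (1 - s)\<close> decreases every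
  \<open>s \<ge> e\<close> by at least \<open>pgf (1 - e) - (1 - e) > 0\<close>.\<close>
lemma extinction_iteration_small:
  fixes s :: "nat \<Rightarrow> real"
  assumes s_bounds: "\<And>N. 0 \<le> s N \<and> s N \<le> 1"
    and s_step: "\<And>N. s (Suc N) \<le> 1 - pgf (1 - s N)"
    and e: "e > 0"
  shows "\<exists>N. s N < e"
proof (rule ccontr)
  assume "\<not> (\<exists>N. s N < e)"
  then have ge: "\<And>N. s N \<ge> e" by (simp add: not_less)
  have e1: "e \<le> 1" using ge[of 0] s_bounds[of 0] by simp
  define d where "d = pgf (1 - e) - (1 - e)"
  have d: "d > 0" unfolding d_def using pgf_gt[of "1 - e"] e e1 by simp
  have step: "s (Suc N) \<le> s N - d" for N
    using pgf_diff_le[of "1 - s N" "1 - e"] s_bounds[of N] ge[of N] e s_step[of N]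
    unfolding d_def by simp
  have bound: "s N \<le> 1 - real N * d" for N
  proof (induction N)
    case 0 then show ?case using s_bounds[of 0] by simp
  next
    case (Suc N) then show ?case using step[of N] by (simp add: algebra_simps)
  qed
  obtain N where "real N * d > 1" using d reals_Archimedean3 by blast
  then show False using s_bounds[of N] bound[of N] by linarith
qed

lemma pgf_eq_if_sums:
  assumes "0 \<le> y" "y \<le> 1" "(\<lambda>k. pmf \<mu> k * y ^ k) sums x"
  shows "pgf y = x"
proof -
  have "ennreal (pgf y) = (\<integral>\<^sup>+k. ennreal (y ^ k) \<partial>measure_pmf \<mu>)"
    unfolding pgf_def using assms by (intro nn_integral_eq_integral[symmetric] integrable_power) auto
  also have "\<dots> = (\<Sum>k. ennreal (pmf \<mu> k * y ^ k))"
    using assms by (simp add: nn_integral_measure_pmf nn_integral_count_space_nat ennreal_mult)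
  also have "\<dots> = ennreal x"
    using assms by (intro suminf_ennreal_eq) auto
  finally have "ennreal (pgf y) = ennreal x" .
  moreover have "0 \<le> x" using sums_le[OF _ sums_zero assms(3)] assms by auto
  ultimately show ?thesis using pgf_bounds[OF assms(1,2)] by simp
qed

end

section \<open>Survival in Galton--Watson trees\<close>

text \<open>A family of trees indexed by \<open>a\<close> is coded by \<open>f\<close>: \<open>fst (f (a, w))\<close> is the number of
  children of the vertex with Ulam--Harris label \<open>w\<close> in tree \<open>a\<close>.\<close>
definition survives :: "nat \<Rightarrow> (nat \<times> nat list \<Rightarrow> nat \<times> 'b) \<Rightarrow> nat \<Rightarrow> nat list \<Rightarrow> bool" where
  "survives N f a w \<longleftrightarrow> (\<exists>v. length v = N \<and> (\<forall>j<N. v ! j < fst (f (a, w @ take j v))))"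

lemma survives_0 [simp]: "survives 0 f a w"
  unfolding survives_def by auto

lemma survives_Suc: "survives (Suc N) f a w \<longleftrightarrow> (\<exists>i<fst (f (a, w)). survives N f a (w @ [i]))"
proof
  assume "survives (Suc N) f a w"
  then obtain v where v: "length v = Suc N" "\<forall>j<Suc N. v ! j < fst (f (a, w @ take j v))"
    unfolding survives_def by blast
  then obtain i v' where iv: "v = i # v'" by (cases v) auto
  have "i < fst (f (a, w))" using v(2)[rule_format, of 0] iv by simp
  moreover have "survives N f a (w @ [i])"
    unfolding survives_def
    using v iv by (intro exI[of _ v']) (auto dest: spec[of _ "Suc _"])
  ultimately show "\<exists>i<fst (f (a, w)). survives N f a (w @ [i])" by blast
next
  assume "\<exists>i<fst (f (a, w)). survives N f a (w @ [i])"
  then obtain i v where i: "i < fst (f (a, w))" and v: "length v = N"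
      "\<forall>j<N. v ! j < fst (f (a, (w @ [i]) @ take j v))"
    unfolding survives_def by blast
  have "(i # v) ! j < fst (f (a, w @ take j (i # v)))" if "j < Suc N" for j
    using i v that by (cases j) auto
  then show "survives (Suc N) f a w"
    unfolding survives_def using v by (intro exI[of _ "i # v"]) auto
qed

lemma survives_cong:
  assumes "\<And>u. f (a, w @ u) = g (a, w @ u)"
  shows "survives N f a w = survives N g a w"
  unfolding survives_def using assms by simp

lemma measurable_survives:
  assumes "\<And>u. (a, w @ u) \<in> K"
  shows "Measurable.pred (PiM K (\<lambda>_. measure_pmf p)) (\<lambda>f. survives N f a w)"
  using assms
proof (induction N arbitrary: w)
  case 0 then show ?case by simp
next
  case (Suc N)
  have "(\<lambda>f. f (a, w)) \<in> measurable (PiM K (\<lambda>_. measure_pmf p)) (measure_pmf p)"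
    using Suc.prems[of "[]"] by (intro measurable_component_singleton) simp
  then have "Measurable.pred (PiM K (\<lambda>_. measure_pmf p)) (\<lambda>f. i < fst (f (a, w)))" for i
    by (rule measurable_compose) simp
  moreover have "Measurable.pred (PiM K (\<lambda>_. measure_pmf p)) (\<lambda>f. survives N f a (w @ [i]))" for i
    using Suc.prems by (intro Suc.IH) (metis append.assoc append_Cons append_Nil)
  ultimately show ?case
    unfolding survives_Suc by (intro pred_intros_countable pred_intros_logic) auto
qed

abbreviation tree_space :: "'a pmf \<Rightarrow> (nat \<times> nat list \<Rightarrow> 'a) measure" where
  "tree_space p \<equiv> PiM UNIV (\<lambda>_. measure_pmf p)"

lemma prob_space_tree_space: "prob_space (tree_space p)"
  by (rule prob_space_PiM) (simp add: measure_pmf.prob_space_axioms)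

lemma sets_survives [measurable]: "{f \<in> space (tree_space p). survives N f a w} \<in> sets (tree_space p)"
proof -
  have "Measurable.pred (tree_space p) (\<lambda>f. survives N f a w)"
    by (rule measurable_survives) simp
  then show ?thesis by (simp add: pred_def)
qed

lemma prob_coordinate_tree_space:
  "measure (tree_space p) {f \<in> space (tree_space p). f l \<in> X} = measure (measure_pmf p) X"
proof -
  interpret product_prob_space "\<lambda>_. measure_pmf p" UNIV
    by (rule product_prob_spaceI) (simp add: measure_pmf.prob_space_axioms)
  show ?thesis
    using emeasure_PiM_Collect_single[of l X]
    by (simp add: emeasure_eq_measure measure_pmf.emeasure_eq_measure)
qed

lemma indep_vars_coordinates_tree_space:
  "prob_space.indep_vars (tree_space p) (\<lambda>_. measure_pmf p) (\<lambda>i f. f i) UNIV"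
proof -
  interpret product_prob_space "\<lambda>_. measure_pmf p" UNIV
    by (rule product_prob_spaceI) (simp add: measure_pmf.prob_space_axioms)
  have "distr (tree_space p) (tree_space p) (\<lambda>f. \<lambda>i\<in>UNIV. f i) = distr (tree_space p) (tree_space p) (\<lambda>f. f)"
    by (intro distr_cong) auto
  also have "\<dots> = PiM UNIV (\<lambda>i. distr (tree_space p) (measure_pmf p) (\<lambda>f. f i))"
    by (simp add: distr_id PiM_component cong: PiM_cong)
  finally show ?thesis
    by (subst indep_vars_iff_distr_eq_PiM) (auto intro: measurable_component_singleton)
qed

text \<open>The offspring number of \<open>w\<close> and the subtrees of its children depend on disjoint sets
  of coordinates.\<close>
lemma prob_root_and_subtrees_die:
  fixes p :: "(nat \<times> 'b) pmf"
  defines "P \<equiv> tree_space p"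
  shows "measure P {f \<in> space P. fst (f (a, w)) = k \<and> (\<forall>i<k. \<not> survives N f a (w @ [i]))}
       = measure p {x. fst x = k} * (\<Prod>i<k. 1 - measure P {f \<in> space P. survives N f a (w @ [i])})"
proof -
  interpret P: prob_space P unfolding P_def by (rule prob_space_tree_space)
  define K where "K j = (case j of None \<Rightarrow> {(a, w)} | Some i \<Rightarrow> {(a, w @ [i] @ u) | u. True})"
    for j :: "nat option"
  define r where "r j f = restrict f (K j)" for j and f :: "nat \<times> nat list \<Rightarrow> nat \<times> 'b"
  have "disjoint_family_on K UNIV"
    unfolding disjoint_family_on_def K_def by (auto split: option.splits)
  moreover have "P.indep_vars (\<lambda>_. measure_pmf p) (\<lambda>i f. f i) UNIV"
    using indep_vars_coordinates_tree_space[of p] by (simp add: P_def)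
  ultimately have ind: "P.indep_vars (\<lambda>j. PiM (K j) (\<lambda>_. measure_pmf p)) r UNIV"
    unfolding r_def by (intro P.indep_vars_restrict) auto
  define A where "A j = (case j of
      None \<Rightarrow> {g \<in> space (PiM (K j) (\<lambda>_. measure_pmf p)). fst (g (a, w)) = k}
    | Some i \<Rightarrow> {g \<in> space (PiM (K j) (\<lambda>_. measure_pmf p)). \<not> survives N g a (w @ [i])})" for j
  have A_sets: "A j \<in> sets (PiM (K j) (\<lambda>_. measure_pmf p))" for j
  proof (cases j)
    case None
    have "(\<lambda>f. f (a, w)) \<in> measurable (PiM (K j) (\<lambda>_. measure_pmf p)) (measure_pmf p)"
      using None by (intro measurable_component_singleton) (simp add: K_def)
    then have "Measurable.pred (PiM (K j) (\<lambda>_. measure_pmf p)) (\<lambda>g. fst (g (a, w)) = k)"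
      by (rule measurable_compose) simp
    then show ?thesis using None by (simp add: A_def pred_def)
  next
    case (Some i)
    have "Measurable.pred (PiM (K j) (\<lambda>_. measure_pmf p)) (\<lambda>g. survives N g a (w @ [i]))"
      using Some by (intro measurable_survives) (auto simp: K_def)
    then show ?thesis using Some by (simp add: A_def pred_def pred_intros_logic)
  qed
  have root: "r None -` A None \<inter> space P = {f \<in> space P. fst (f (a, w)) = k}"
    by (auto simp: A_def K_def r_def P_def space_PiM PiE_iff)
  have subtree: "r (Some i) -` A (Some i) \<inter> space P = space P - {f \<in> space P. survives N f a (w @ [i])}" for i
  proof -
    have "survives N (restrict f (K (Some i))) a (w @ [i]) = survives N f a (w @ [i])" for f
      by (rule survives_cong) (auto simp: K_def)
    then show ?thesis by (auto simp: A_def r_def P_def space_PiM PiE_iff)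
  qed
  have "(\<Inter>j\<in>insert None (Some ` {..<k}). r j -` A j \<inter> space P)
      = (r None -` A None \<inter> space P) \<inter> (\<Inter>i<k. r (Some i) -` A (Some i) \<inter> space P)"
    by auto
  also have "\<dots> = {f \<in> space P. fst (f (a, w)) = k \<and> (\<forall>i<k. \<not> survives N f a (w @ [i]))}"
    unfolding root subtree by auto
  finally have "{f \<in> space P. fst (f (a, w)) = k \<and> (\<forall>i<k. \<not> survives N f a (w @ [i]))}
      = (\<Inter>j\<in>insert None (Some ` {..<k}). r j -` A j \<inter> space P)" ..
  also have "P.prob \<dots> = (\<Prod>j\<in>insert None (Some ` {..<k}). P.prob (r j -` A j \<inter> space P))"
    using P.indep_varsD[OF ind, of "insert None (Some ` {..<k})" A] A_sets by simp
  also have "\<dots> = measure p {x. fst x = k} * (\<Prod>i<k. 1 - P.prob {f \<in> space P. survives N f a (w @ [i])})"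
  proof -
    have "P.prob {f \<in> space P. fst (f (a, w)) = k} = measure p {x. fst x = k}"
      using prob_coordinate_tree_space[of p "(a, w)" "{x. fst x = k}"] by (simp add: P_def)
    moreover have "{f \<in> space P. survives N f a (w @ [i])} \<in> P.events" for i
      by (simp add: P_def)
    ultimately show ?thesis by (simp add: root subtree prod.reindex P.prob_compl)
  qed
  finally show ?thesis .
qed

context critical_offspring
begin

fun survival_prob :: "nat \<Rightarrow> real" where
  "survival_prob 0 = 1"
| "survival_prob (Suc N) = 1 - pgf (1 - survival_prob N)"

lemma survival_prob_bounds: "0 \<le> survival_prob N \<and> survival_prob N \<le> 1"
  by (induction N) (use pgf_bounds in auto)

lemma survival_prob_small: "e > 0 \<Longrightarrow> \<exists>N. survival_prob N < e"
  by (rule extinction_iteration_small) (auto simp: survival_prob_bounds)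

lemma prob_survives:
  fixes \<theta> :: "'b pmf"
  defines "P \<equiv> tree_space (pair_pmf \<mu> \<theta>)"
  shows "measure P {f \<in> space P. survives N f a w} = survival_prob N"
proof (induction N arbitrary: w)
  case 0
  interpret P: prob_space P unfolding P_def by (rule prob_space_tree_space)
  show ?case by (simp add: P.prob_space)
next
  case (Suc N)
  interpret P: prob_space P unfolding P_def by (rule prob_space_tree_space)
  define y where "y = 1 - survival_prob N"
  have y: "0 \<le> y" "y \<le> 1" using survival_prob_bounds[of N] by (auto simp: y_def)
  define B where "B k = {f \<in> space P. fst (f (a, w)) = k \<and> (\<forall>i<k. \<not> survives N f a (w @ [i]))}" for k
  have "measure (pair_pmf \<mu> \<theta>) {x. fst x = k} = measure (map_pmf fst (pair_pmf \<mu> \<theta>)) {k}" for k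
    by (simp add: vimage_def)
  then have "measure (pair_pmf \<mu> \<theta>) {x. fst x = k} = pmf \<mu> k" for k
    by (simp add: map_fst_pair_pmf measure_pmf_single)
  then have prob_B: "P.prob (B k) = pmf \<mu> k * y ^ k" for k
    unfolding B_def P_def using prob_root_and_subtrees_die[where p="pair_pmf \<mu> \<theta>"] Suc.IH
    by (simp add: y_def P_def)
  have "(\<lambda>f. f (a, w)) \<in> measurable P (measure_pmf (pair_pmf \<mu> \<theta>))"
    unfolding P_def by (intro measurable_component_singleton) simp
  then have "{f \<in> space P. fst (f (a, w)) = k} \<in> sets P" for k
    using measurable_compose[of _ P _ "\<lambda>x. fst x = k" "count_space UNIV"] by (simp add: pred_def)
  moreover have "B k = (space P - (\<Union>i<k. {f \<in> space P. survives N f a (w @ [i])}))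
                    \<inter> {f \<in> space P. fst (f (a, w)) = k}" for k
    unfolding B_def by auto
  ultimately have "range B \<subseteq> sets P" unfolding P_def by auto
  moreover have "disjoint_family B" unfolding disjoint_family_on_def B_def by auto
  ultimately have "(\<lambda>k. P.prob (B k)) sums P.prob (\<Union>k. B k)"
    by (rule P.finite_measure_UNION)
  moreover have "(\<Union>k. B k) = space P - {f \<in> space P. survives (Suc N) f a w}"
    unfolding B_def by (auto simp: survives_Suc)
  ultimately have "pgf y = P.prob (space P - {f \<in> space P. survives (Suc N) f a w})"
    using prob_B y by (intro pgf_eq_if_sums) auto
  also have "\<dots> = 1 - P.prob {f \<in> space P. survives (Suc N) f a w}"
    by (rule P.prob_compl) (simp add: P_def)
  finally show ?case by (simp add: y_def)
qed

end

section \<open>The probability space of the invariant tree\<close>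

abbreviation spine_space :: "nat pmf \<Rightarrow> 'b pmf \<Rightarrow> (nat \<Rightarrow> (nat \<times> nat) \<times> 'b) measure" where
  "spine_space \<mu> \<theta> \<equiv> PiM UNIV (\<lambda>_. measure_pmf (pair_pmf (spine_pmf \<mu>) \<theta>))"

lemma bt_space_eq_pair: "bt_space \<mu> \<theta> = spine_space \<mu> \<theta> \<Otimes>\<^sub>M tree_space (pair_pmf \<mu> \<theta>)"
  unfolding bt_space_def ..

lemma prob_space_spine_space: "prob_space (spine_space \<mu> \<theta>)"
  by (rule prob_space_PiM) (simp add: measure_pmf.prob_space_axioms)

lemma prob_space_bt_space: "prob_space (bt_space \<mu> \<theta>)"
proof -
  interpret A: prob_space "spine_space \<mu> \<theta>" by (rule prob_space_spine_space)
  interpret B: prob_space "tree_space (pair_pmf \<mu> \<theta>)" by (rule prob_space_tree_space)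
  interpret pair_prob_space "spine_space \<mu> \<theta>" "tree_space (pair_pmf \<mu> \<theta>)" ..
  show ?thesis unfolding bt_space_eq_pair by (rule prob_space_axioms)
qed

lemma measurable_spine_coordinate [measurable]:
  "(\<lambda>\<omega>. fst \<omega> n) \<in> measurable (bt_space \<mu> \<theta>) (measure_pmf (pair_pmf (spine_pmf \<mu>) \<theta>))"
  unfolding bt_space_eq_pair
  by (rule measurable_compose[OF measurable_fst]) (rule measurable_component_singleton, simp)

lemma measurable_tree_coordinate [measurable]:
  "(\<lambda>\<omega>. snd \<omega> l) \<in> measurable (bt_space \<mu> \<theta>) (measure_pmf (pair_pmf \<mu> \<theta>))"
  unfolding bt_space_eq_pair
  by (rule measurable_compose[OF measurable_snd]) (rule measurable_component_singleton, simp)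

lemma measurable_Lc [measurable]: "(\<lambda>\<omega>. Lc \<omega> n) \<in> measurable (bt_space \<mu> \<theta>) (count_space UNIV)"
  unfolding Lc_def by (rule measurable_compose[OF measurable_spine_coordinate]) simp

lemma measurable_Dsp [measurable]: "(\<lambda>\<omega>. Dsp \<omega> n) \<in> measurable (bt_space \<mu> \<theta>) (count_space UNIV)"
  unfolding Dsp_def by (rule measurable_compose[OF measurable_spine_coordinate]) simp

lemma measurable_xi [measurable]: "(\<lambda>\<omega>. xi \<omega> n w) \<in> measurable (bt_space \<mu> \<theta>) (count_space UNIV)"
  unfolding xi_def by (rule measurable_compose[OF measurable_tree_coordinate]) simp

lemma measurable_Dtr [measurable]: "(\<lambda>\<omega>. Dtr \<omega> n w) \<in> measurable (bt_space \<mu> \<theta>) (count_space UNIV)"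
  unfolding Dtr_def by (rule measurable_compose[OF measurable_tree_coordinate]) simp

lemma measurable_in_sub [measurable]: "Measurable.pred (bt_space \<mu> \<theta>) (\<lambda>\<omega>. in_sub \<omega> n w)"
  unfolding in_sub_def by measurable

lemma measure_pair_measure_Times:
  assumes "prob_space A" "prob_space B" "X \<in> sets A" "Y \<in> sets B"
  shows "measure (A \<Otimes>\<^sub>M B) (X \<times> Y) = measure A X * measure B Y"
proof -
  interpret A: prob_space A by fact
  interpret B: prob_space B by fact
  have "emeasure (A \<Otimes>\<^sub>M B) (X \<times> Y) = emeasure A X * emeasure B Y"
    using assms by (intro B.emeasure_pair_measure_Times) auto
  then show ?thesis by (simp add: measure_def enn2real_mult)
qed

lemma (in finite_measure) finite_measure_UN_le_card_mult:
  assumes "finite J" "\<And>j. j \<in> J \<Longrightarrow> A j \<in> sets M" "\<And>j. j \<in> J \<Longrightarrow> measure M (A j) \<le> B"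
  shows "measure M (\<Union>j\<in>J. A j) \<le> real (card J) * B"
proof -
  have "measure M (\<Union>j\<in>J. A j) \<le> (\<Sum>j\<in>J. measure M (A j))"
    using assms by (intro finite_measure_subadditive_finite) auto
  also have "\<dots> \<le> (\<Sum>j\<in>J. B)" using assms by (intro sum_mono) auto
  finally show ?thesis by simp
qed

lemma prob_bt_space_fst:
  assumes "Measurable.pred (spine_space \<mu> \<theta>) Q"
  shows "measure (bt_space \<mu> \<theta>) {\<omega> \<in> space (bt_space \<mu> \<theta>). Q (fst \<omega>)}
       = measure (spine_space \<mu> \<theta>) {x \<in> space (spine_space \<mu> \<theta>). Q x}"
proof -
  have "{\<omega> \<in> space (bt_space \<mu> \<theta>). Q (fst \<omega>)}
      = {x \<in> space (spine_space \<mu> \<theta>). Q x} \<times> space (tree_space (pair_pmf \<mu> \<theta>))"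
    unfolding bt_space_eq_pair by (auto simp: space_pair_measure)
  moreover have "measure (spine_space \<mu> \<theta> \<Otimes>\<^sub>M tree_space (pair_pmf \<mu> \<theta>))
      ({x \<in> space (spine_space \<mu> \<theta>). Q x} \<times> space (tree_space (pair_pmf \<mu> \<theta>)))
    = measure (spine_space \<mu> \<theta>) {x \<in> space (spine_space \<mu> \<theta>). Q x}"
    using assms prob_space.prob_space[OF prob_space_tree_space[of "pair_pmf \<mu> \<theta>"]]
    by (subst measure_pair_measure_Times[OF prob_space_spine_space prob_space_tree_space])
       (auto simp: pred_def)
  ultimately show ?thesis unfolding bt_space_eq_pair by simp
qed

lemma prob_bt_space_snd:
  assumes "Measurable.pred (tree_space (pair_pmf \<mu> \<theta>)) Q"
  shows "measure (bt_space \<mu> \<theta>) {\<omega> \<in> space (bt_space \<mu> \<theta>). Q (snd \<omega>)}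
       = measure (tree_space (pair_pmf \<mu> \<theta>)) {x \<in> space (tree_space (pair_pmf \<mu> \<theta>)). Q x}"
proof -
  have "{\<omega> \<in> space (bt_space \<mu> \<theta>). Q (snd \<omega>)}
      = space (spine_space \<mu> \<theta>) \<times> {x \<in> space (tree_space (pair_pmf \<mu> \<theta>)). Q x}"
    unfolding bt_space_eq_pair by (auto simp: space_pair_measure)
  moreover have "measure (spine_space \<mu> \<theta> \<Otimes>\<^sub>M tree_space (pair_pmf \<mu> \<theta>))
      (space (spine_space \<mu> \<theta>) \<times> {x \<in> space (tree_space (pair_pmf \<mu> \<theta>)). Q x})
    = measure (tree_space (pair_pmf \<mu> \<theta>)) {x \<in> space (tree_space (pair_pmf \<mu> \<theta>)). Q x}"
    using assms prob_space.prob_space[OF prob_space_spine_space[of \<mu> \<theta>]]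
    by (subst measure_pair_measure_Times[OF prob_space_spine_space prob_space_tree_space])
       (auto simp: pred_def)
  ultimately show ?thesis unfolding bt_space_eq_pair by simp
qed

lemma prob_spine_cylinder:
  assumes "finite J"
  shows "measure (bt_space \<mu> \<theta>) {\<omega> \<in> space (bt_space \<mu> \<theta>). \<forall>k\<in>J. Q (fst \<omega> k)}
       = measure (pair_pmf (spine_pmf \<mu>) \<theta>) {x. Q x} ^ card J"
proof -
  interpret product_prob_space "\<lambda>_::nat. measure_pmf (pair_pmf (spine_pmf \<mu>) \<theta>)" UNIV
    by (rule product_prob_spaceI) (simp add: measure_pmf.prob_space_axioms)
  have "Measurable.pred (spine_space \<mu> \<theta>) (\<lambda>x. Q (x k))" for k
    by (rule measurable_compose[OF measurable_component_singleton]) auto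
  then have pred: "Measurable.pred (spine_space \<mu> \<theta>) (\<lambda>x. \<forall>k\<in>J. Q (x k))"
    using assms by (intro pred_intros_finite) auto
  have "measure (bt_space \<mu> \<theta>) {\<omega> \<in> space (bt_space \<mu> \<theta>). \<forall>k\<in>J. Q (fst \<omega> k)}
      = measure (spine_space \<mu> \<theta>) {x \<in> space (spine_space \<mu> \<theta>). \<forall>k\<in>J. x k \<in> {x. Q x}}"
    using prob_bt_space_fst[OF pred] by simp
  also have "ennreal \<dots> = ennreal (measure (pair_pmf (spine_pmf \<mu>) \<theta>) {x. Q x} ^ card J)"
    using emeasure_PiM_Collect[of J "\<lambda>_. {x. Q x}"] assms
    by (simp add: emeasure_eq_measure measure_pmf.emeasure_eq_measure prod_ennreal ennreal_power)
  finally show ?thesis by (simp add: ennreal_inj)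
qed

lemma prob_Dsp_tail:
  "measure (bt_space \<mu> \<theta>) {\<omega> \<in> space (bt_space \<mu> \<theta>). s \<le> norm (rv (Dsp \<omega> j))}
     = measure \<theta> {y. s \<le> norm (rv y)}"
proof -
  have "measure (bt_space \<mu> \<theta>) {\<omega> \<in> space (bt_space \<mu> \<theta>). s \<le> norm (rv (Dsp \<omega> j))}
      = measure (pair_pmf (spine_pmf \<mu>) \<theta>) {x. s \<le> norm (rv (snd x))}"
    using prob_spine_cylinder[of "{j}" \<mu> \<theta> "\<lambda>x. s \<le> norm (rv (snd x))"] by (simp add: Dsp_def)
  also have "\<dots> = measure (map_pmf snd (pair_pmf (spine_pmf \<mu>) \<theta>)) {y. s \<le> norm (rv y)}"
    by (simp add: vimage_def)
  finally show ?thesis by (simp add: map_snd_pair_pmf)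
qed

lemma prob_Dtr_tail:
  "measure (bt_space \<mu> \<theta>) {\<omega> \<in> space (bt_space \<mu> \<theta>). s \<le> norm (rv (Dtr \<omega> k w))}
     = measure \<theta> {y. s \<le> norm (rv y)}"
proof -
  have pred: "Measurable.pred (tree_space (pair_pmf \<mu> \<theta>)) (\<lambda>x. s \<le> norm (rv (snd (x (k, w)))))"
    by (rule measurable_compose[OF measurable_component_singleton]) auto
  have "measure (bt_space \<mu> \<theta>) {\<omega> \<in> space (bt_space \<mu> \<theta>). s \<le> norm (rv (Dtr \<omega> k w))}
      = measure (pair_pmf \<mu> \<theta>) {x. s \<le> norm (rv (snd x))}"
    using prob_coordinate_tree_space[of "pair_pmf \<mu> \<theta>" "(k, w)" "{x. s \<le> norm (rv (snd x))}"]
    using prob_bt_space_snd[OF pred] by (simp add: Dtr_def)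
  also have "\<dots> = measure (map_pmf snd (pair_pmf \<mu> \<theta>)) {y. s \<le> norm (rv y)}"
    by (simp add: vimage_def)
  finally show ?thesis by (simp add: map_snd_pair_pmf)
qed

section \<open>The hanging subtrees are finite\<close>

lemma finite_bounded_words:
  fixes c :: "nat list \<Rightarrow> nat"
  shows "finite {w. length w \<le> N \<and> (\<forall>j<length w. w ! j < c (take j w))}"
proof (induction N)
  case 0 then show ?case by simp
next
  case (Suc N)
  let ?S = "\<lambda>N. {w. length w \<le> N \<and> (\<forall>j<length w. w ! j < c (take j w))}"
  have "?S (Suc N) \<subseteq> ?S N \<union> (\<lambda>(u, x). u @ [x]) ` (SIGMA u:?S N. {..<c u})"
  proof
    fix w assume w: "w \<in> ?S (Suc N)"
    show "w \<in> ?S N \<union> (\<lambda>(u, x). u @ [x]) ` (SIGMA u:?S N. {..<c u})"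
    proof (cases "length w \<le> N")
      case True then show ?thesis using w by auto
    next
      case False
      then have l: "length w = Suc N" using w by auto
      then obtain u x where "w = u @ [x]" by (metis length_Suc_conv_rev)
      with l have ux: "w = u @ [x]" "length u = N" by auto
      have "u ! j < c (take j u)" if "j < length u" for j
      proof -
        have "w ! j < c (take j w)" using w that ux by auto
        moreover have "w ! j = u ! j" "take j w = take j u" using that ux by (auto simp: nth_append)
        ultimately show ?thesis by simp
      qed
      moreover have "x < c u"
      proof -
        have "w ! N < c (take N w)" using w ux by auto
        then show ?thesis using ux by (simp add: nth_append)
      qed
      ultimately show ?thesis using ux by auto
    qed
  qed
  moreover have "finite (?S N \<union> (\<lambda>(u, x). u @ [x]) ` (SIGMA u:?S N. {..<c u}))"
    using Suc.IH by (intro finite_UnI finite_imageI finite_SigmaI) auto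
  ultimately show ?case by (rule finite_subset)
qed

definition unbounded_subtree :: "'d bt_omega \<Rightarrow> nat \<Rightarrow> bool" where
  "unbounded_subtree \<omega> a \<longleftrightarrow> (\<forall>N. \<exists>w. N \<le> length w \<and> in_sub \<omega> a w)"

lemma measurable_unbounded_subtree [measurable]:
  "Measurable.pred (bt_space \<mu> \<theta>) (\<lambda>\<omega>. unbounded_subtree \<omega> a)"
  unfolding unbounded_subtree_def by measurable

lemma finite_in_sub_if_bounded:
  assumes "\<not> unbounded_subtree \<omega> a"
  shows "finite {w. in_sub \<omega> a w}"
proof -
  obtain N where N: "\<And>w. in_sub \<omega> a w \<Longrightarrow> length w < N"
    using assms unfolding unbounded_subtree_def by (meson not_le)
  define c where "c u = (if u = [] then Lc \<omega> a else xi \<omega> a u)" for u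
  have "w ! j < c (take j w)" if w: "in_sub \<omega> a w" and j: "j < length w" for w j
  proof (cases j)
    case 0 then show ?thesis using w unfolding in_sub_def c_def by (cases w) auto
  next
    case (Suc j') then show ?thesis using w j unfolding in_sub_def c_def by auto
  qed
  then have "{w. in_sub \<omega> a w} \<subseteq> {w. length w \<le> N \<and> (\<forall>j<length w. w ! j < c (take j w))}"
    using N by (auto simp: less_imp_le)
  then show ?thesis using finite_bounded_words finite_subset by blast
qed

text \<open>A subtree of height beyond \<open>N + 1\<close> needs either many children of the spine vertex
  or a child of the spine vertex whose own tree survives \<open>N\<close> generations.\<close>
lemma unbounded_subtree_cases:
  assumes "unbounded_subtree \<omega> a"
  shows "K < Lc \<omega> a \<or> (\<exists>i<K. survives N (snd \<omega>) a [i])"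
proof -
  obtain w where w: "Suc N \<le> length w" "in_sub \<omega> a w"
    using assms unfolding unbounded_subtree_def by blast
  obtain i u where iu: "w = i # u" using w by (cases w) auto
  have branch: "\<forall>j. 1 \<le> j \<and> j < length w \<longrightarrow> w ! j < xi \<omega> a (take j w)"
    using w unfolding in_sub_def by blast
  have "survives N (snd \<omega>) a [i]"
    unfolding survives_def
  proof (intro exI[of _ "take N u"] conjI allI impI)
    show "length (take N u) = N" using w iu by simp
    fix j assume j: "j < N"
    have "w ! Suc j < xi \<omega> a (take (Suc j) w)"
      using branch[rule_format, of "Suc j"] w j by simp
    then show "take N u ! j < fst (snd \<omega> (a, [i] @ take j (take N u)))"
      using j iu by (simp add: xi_def min_def)
  qed
  moreover have "i < Lc \<omega> a" using w iu unfolding in_sub_def by simp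
  ultimately show ?thesis by (cases "K < Lc \<omega> a") (auto intro: exI[of _ i])
qed

lemma (in critical_offspring) prob_unbounded_subtree_le:
  "measure (bt_space \<mu> \<theta>) {\<omega> \<in> space (bt_space \<mu> \<theta>). unbounded_subtree \<omega> a}
     \<le> measure (bt_space \<mu> \<theta>) {\<omega> \<in> space (bt_space \<mu> \<theta>). K < Lc \<omega> a} + real K * survival_prob N"
proof -
  let ?O = "bt_space \<mu> \<theta>"
  interpret O: prob_space ?O by (rule prob_space_bt_space)
  define A where "A = {\<omega> \<in> space ?O. K < Lc \<omega> a}"
  define R where "R i = {\<omega> \<in> space ?O. survives N (snd \<omega>) a [i]}" for i
  have A_sets: "A \<in> sets ?O" unfolding A_def by measurable
  have "(\<lambda>\<omega>. snd \<omega>) \<in> measurable ?O (tree_space (pair_pmf \<mu> \<theta>))"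
    unfolding bt_space_eq_pair by simp
  then have R_sets: "R i \<in> sets ?O" for i
    unfolding R_def using measurable_survives[of a "[i]" UNIV]
    by (simp add: pred_def[symmetric] measurable_compose)
  have prob_R: "O.prob (R i) = survival_prob N" for i
    unfolding R_def
    by (subst prob_bt_space_snd) (auto intro: measurable_survives simp: prob_survives)
  have "{\<omega> \<in> space ?O. unbounded_subtree \<omega> a} \<subseteq> A \<union> (\<Union>i<K. R i)"
    unfolding A_def R_def using unbounded_subtree_cases[of _ a K N] by auto
  then have "O.prob {\<omega> \<in> space ?O. unbounded_subtree \<omega> a} \<le> O.prob (A \<union> (\<Union>i<K. R i))"
    using A_sets R_sets by (intro O.finite_measure_mono) auto
  also have "\<dots> \<le> O.prob A + O.prob (\<Union>i<K. R i)"
    using A_sets R_sets by (intro measure_Un_le) auto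
  also have "O.prob (\<Union>i<K. R i) \<le> real (card {..<K}) * survival_prob N"
    using R_sets prob_R by (intro O.finite_measure_UN_le_card_mult) auto
  finally show ?thesis by (simp add: A_def)
qed

lemma (in critical_offspring) unbounded_subtree_null:
  "{\<omega> \<in> space (bt_space \<mu> \<theta>). unbounded_subtree \<omega> a} \<in> null_sets (bt_space \<mu> \<theta>)"
proof -
  let ?O = "bt_space \<mu> \<theta>"
  let ?X = "{\<omega> \<in> space ?O. unbounded_subtree \<omega> a}"
  interpret O: prob_space ?O by (rule prob_space_bt_space)
  have "O.prob ?X \<le> 0 + e" if e: "e > 0" for e
  proof -
    define A where "A K = {\<omega> \<in> space ?O. K < Lc \<omega> a}" for K
    have "A K \<in> sets ?O" for K unfolding A_def by measurable
    then have A_sets: "range A \<subseteq> sets ?O" by auto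
    have "decseq A" unfolding A_def decseq_def by auto
    moreover have "(\<Inter>K. A K) = {}" unfolding A_def by (auto dest: spec[of _ "Lc _ a"])
    ultimately have "(\<lambda>K. O.prob (A K)) \<longlonglongrightarrow> 0"
      using O.finite_Lim_measure_decseq[OF A_sets] by simp
    then obtain K where K: "O.prob (A K) < e / 2"
      using e by (metis (no_types, lifting) LIMSEQ_D diff_zero half_gt_zero le_refl norm_minus_cancel
          real_norm_def abs_less_iff)
    obtain N where N: "survival_prob N < e / (2 * (real K + 1))"
      using survival_prob_small[of "e / (2 * (real K + 1))"] e by auto
    have "real K * survival_prob N \<le> real K * (e / (2 * (real K + 1)))"
      using N by (intro mult_left_mono) auto
    also have "\<dots> \<le> e / 2"
      using e by (simp add: field_simps)
    finally show ?thesis using K prob_unbounded_subtree_le[of \<theta> a K N] unfolding A_def by simp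
  qed
  then have "O.prob ?X = 0" using field_le_epsilon[of "O.prob ?X" 0] by (simp add: antisym)
  moreover have "?X \<in> sets ?O" by measurable
  ultimately show ?thesis by (simp add: null_setsI O.emeasure_eq_measure)
qed

section \<open>Explored spine vertices are close to earlier vertices of \<open>\<Y>\<close>\<close>

lemma rv_diff: "rv (a - b) = rv a - rv b"
  by (simp add: rv_def vec_eq_iff)

lemma rv_zero [simp]: "rv 0 = 0"
  by (simp add: rv_def vec_eq_iff)

lemma rv_sum: "rv (sum f A) = (\<Sum>x\<in>A. rv (f x))"
  by (induction A rule: infinite_finite_induct) (auto simp: rv_def vec_eq_iff)

lemma norm_rv_sum_le:
  assumes "\<And>x. x \<in> A \<Longrightarrow> norm (rv (f x)) < s"
  shows "norm (rv (sum f A)) \<le> real (card A) * s"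
proof -
  have "norm (rv (sum f A)) \<le> (\<Sum>x\<in>A. norm (rv (f x)))"
    unfolding rv_sum by (rule norm_sum)
  also have "\<dots> \<le> (\<Sum>x\<in>A. s)" using assms by (intro sum_mono) (simp add: less_imp_le)
  finally show ?thesis by simp
qed

fun spine_index :: "vtx \<Rightarrow> nat" where
  "spine_index (Sp n) = n"
| "spine_index (Sb n w) = n"

lemma vless_spine_index: "vless u v \<Longrightarrow> spine_index u \<le> spine_index v"
  by (cases u; cases v) auto

lemma verts_cases: "u \<in> verts \<omega> \<Longrightarrow> (\<exists>a. u = Sp a) \<or> (\<exists>a w. u = Sb a w \<and> in_sub \<omega> a w)"
  unfolding verts_def by auto

context
  fixes \<omega> :: "'d bt_omega"
  assumes finite_subtrees: "\<And>a. finite {w. in_sub \<omega> a w}"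
begin

lemma finite_verts_spine_index_le: "finite {u \<in> verts \<omega>. spine_index u \<le> b}"
proof -
  have "{u \<in> verts \<omega>. spine_index u \<le> b}
      \<subseteq> Sp ` {..b} \<union> (\<Union>a\<in>{..b}. Sb a ` {w. in_sub \<omega> a w})"
    by (auto dest!: verts_cases)
  then show ?thesis by (rule finite_subset) (use finite_subtrees in auto)
qed

lemma finite_explored_before: "finite {u \<in> verts \<omega>. vless u v}"
  by (rule finite_subset[OF _ finite_verts_spine_index_le[of "spine_index v"]])
     (auto dest: vless_spine_index)

lemma spine_index_le_rank: "spine_index v \<le> rank \<omega> v"
proof -
  have "Sp ` {..<spine_index v} \<subseteq> {u \<in> verts \<omega>. vless u v}"
    by (cases v) (auto simp: verts_def)
  then have "card (Sp ` {..<spine_index v}) \<le> rank \<omega> v"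
    unfolding rank_def using finite_explored_before by (rule card_mono[rotated])
  then show ?thesis by (simp add: card_image inj_on_def)
qed

lemma rank_Sb_less_rank_Sp:
  assumes "k < n" "in_sub \<omega> k w"
  shows "rank \<omega> (Sb k w) < rank \<omega> (Sp n)"
proof -
  have "insert (Sb k w) {u \<in> verts \<omega>. vless u (Sb k w)} \<subseteq> {u \<in> verts \<omega>. vless u (Sp n)}"
    using assms by (auto simp: verts_def dest!: vless_spine_index)
  then have "card (insert (Sb k w) {u \<in> verts \<omega>. vless u (Sb k w)}) \<le> rank \<omega> (Sp n)"
    unfolding rank_def using finite_explored_before by (intro card_mono) auto
  moreover have "Sb k w \<notin> {u \<in> verts \<omega>. vless u (Sb k w)}"
    by (auto simp: lexord_irreflexive)
  ultimately show ?thesis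
    unfolding rank_def using finite_explored_before by simp
qed

lemma finite_explored_upto: "finite {v \<in> verts \<omega>. rank \<omega> v \<le> m}"
proof -
  have "{v \<in> verts \<omega>. rank \<omega> v \<le> m} \<subseteq> {u \<in> verts \<omega>. spine_index u \<le> m}"
    using spine_index_le_rank le_trans by blast
  then show ?thesis using finite_verts_spine_index_le by (rule finite_subset)
qed

end

lemma rank_Sp_0: "rank \<omega> (Sp 0) = 0"
proof -
  have "{u \<in> verts \<omega>. vless u (Sp 0)} = {}" by (auto dest!: verts_cases)
  then show ?thesis unfolding rank_def by (metis card.empty)
qed

text \<open>Outside this event the spine vertex \<open>Sp n\<close> lies within \<open>(L + 1) s\<close> of a vertex of
  \<open>\<Y>\<close> explored before it: the root, or the first left child of one of the last \<open>L\<close>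
  spine vertices below \<open>Sp n\<close>.\<close>
definition spine_bad :: "nat \<Rightarrow> real \<Rightarrow> nat \<Rightarrow> 'd::finite bt_omega \<Rightarrow> bool" where
  "spine_bad L s n \<omega> \<longleftrightarrow> (L < n \<and> (\<forall>k. n - L \<le> k \<and> k < n \<longrightarrow> Lc \<omega> k = 0))
     \<or> (\<exists>j. 1 \<le> j \<and> j \<le> n \<and> n \<le> j + L \<and> s \<le> norm (rv (Dsp \<omega> j)))
     \<or> (\<exists>k. 1 \<le> k \<and> k < n \<and> n \<le> k + L \<and> s \<le> norm (rv (Dtr \<omega> k [0])))"

lemma branch_point_below_if_not_spine_bad:
  fixes \<omega> :: "'d::finite bt_omega"
  assumes "1 \<le> n" "\<not> spine_bad L s n \<omega>"
  obtains k where "k < n" "n \<le> k + L" "k = 0 \<or> 0 < Lc \<omega> k"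
proof (cases "L < n")
  case True
  then obtain k where "n - L \<le> k" "k < n" "Lc \<omega> k \<noteq> 0"
    using assms(2) unfolding spine_bad_def by blast
  then show ?thesis using that by auto
qed (use that assms(1) in auto)

lemma norm_spine_increment_le_if_not_spine_bad:
  fixes \<omega> :: "'d::finite bt_omega"
  assumes "\<not> spine_bad L s n \<omega>" "k < n" "n \<le> k + L" "s > 0"
  shows "norm (rv (\<Sum>j\<in>{Suc k..n}. Dsp \<omega> j)) \<le> real L * s"
proof -
  have "norm (rv (Dsp \<omega> j)) < s" if "k < j" "j \<le> n" for j
  proof -
    have "\<not> (1 \<le> j \<and> j \<le> n \<and> n \<le> j + L \<and> s \<le> norm (rv (Dsp \<omega> j)))"
      using assms(1) unfolding spine_bad_def by blast
    then show ?thesis using that assms(3) by auto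
  qed
  then have "norm (rv (\<Sum>j\<in>{Suc k..n}. Dsp \<omega> j)) \<le> real (card {Suc k..n}) * s"
    by (intro norm_rv_sum_le) auto
  also have "\<dots> \<le> real L * s" using assms by (intro mult_right_mono) auto
  finally show ?thesis .
qed

lemma Sp_close_to_Yset:
  fixes \<omega> :: "'d::finite bt_omega"
  assumes finite_subtrees: "\<And>a. finite {w. in_sub \<omega> a w}"
    and n: "1 \<le> n" and good: "\<not> spine_bad L s n \<omega>" and s: "s > 0"
  shows "\<exists>y\<in>Yset \<omega>. rank \<omega> y \<le> rank \<omega> (Sp n) \<and>
           dist (rv (pos 0 \<omega> (Sp n))) (rv (pos 0 \<omega> y)) < (real L + 1) * s"
proof -
  obtain k where k: "k < n" "n \<le> k + L" "k = 0 \<or> 0 < Lc \<omega> k"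
    using branch_point_below_if_not_spine_bad[OF n good] .
  have far: "norm (rv (\<Sum>j\<in>{Suc k..n}. Dsp \<omega> j)) \<le> real L * s"
    using norm_spine_increment_le_if_not_spine_bad[OF good k(1,2) s] .
  have split: "pos 0 \<omega> (Sp n) = pos 0 \<omega> (Sp k) + (\<Sum>j\<in>{Suc k..n}. Dsp \<omega> j)"
  proof -
    have "{1..n} = {1..k} \<union> {Suc k..n}" using k by auto
    then show ?thesis by (simp add: sum.union_disjoint)
  qed
  consider "k = 0" | "1 \<le> k" "0 < Lc \<omega> k" using k by linarith
  then show ?thesis
  proof cases
    case 1
    have "Sp 0 \<in> Yset \<omega>" unfolding Yset_def by (auto simp: verts_def)
    then show ?thesis
      using 1 far split s by (intro bexI[of _ "Sp 0"]) (auto simp: rank_Sp_0 dist_norm algebra_simps)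
  next
    case 2
    then have sub: "in_sub \<omega> k [0]" unfolding in_sub_def by auto
    have "\<not> (1 \<le> k \<and> k < n \<and> n \<le> k + L \<and> s \<le> norm (rv (Dtr \<omega> k [0])))"
      using good unfolding spine_bad_def by blast
    then have near: "norm (rv (Dtr \<omega> k [0])) < s" using k 2 by auto
    have "dist (rv (pos 0 \<omega> (Sp n))) (rv (pos 0 \<omega> (Sb k [0])))
        = norm (rv (\<Sum>j\<in>{Suc k..n}. Dsp \<omega> j) - rv (Dtr \<omega> k [0]))"
      using split by (simp add: dist_norm rv_diff[symmetric])
    also have "\<dots> \<le> norm (rv (\<Sum>j\<in>{Suc k..n}. Dsp \<omega> j)) + norm (rv (Dtr \<omega> k [0]))"
      by (rule norm_triangle_ineq4)
    also have "\<dots> < (real L + 1) * s" using far near by (simp add: algebra_simps)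
    finally have "dist (rv (pos 0 \<omega> (Sp n))) (rv (pos 0 \<omega> (Sb k [0]))) < (real L + 1) * s" .
    moreover have "Sb k [0] \<in> Yset \<omega>" unfolding Yset_def verts_def using sub by auto
    moreover have "rank \<omega> (Sb k [0]) \<le> rank \<omega> (Sp n)"
      using rank_Sb_less_rank_Sp[OF finite_subtrees k(1) sub] by simp
    ultimately show ?thesis by blast
  qed
qed

lemma max_infdist_RX_RY_less:
  fixes \<omega> :: "'d::finite bt_omega"
  assumes finite_subtrees: "\<And>a. finite {w. in_sub \<omega> a w}"
    and s: "s > 0" and good: "\<forall>n. 1 \<le> n \<and> n \<le> m \<longrightarrow> \<not> spine_bad L s n \<omega>"
  shows "Max ((\<lambda>z. infdist (rv z) (rv ` RY 0 \<omega> m)) ` RX 0 \<omega> m) < (real L + 1) * s"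
proof -
  have "finite (RX 0 \<omega> m)"
    unfolding RX_def visited_def using finite_explored_upto[OF finite_subtrees] by auto
  moreover have "0 \<in> RX 0 \<omega> m"
    unfolding RX_def visited_def using rank_Sp_0[of \<omega>]
    by (auto simp: verts_def intro!: image_eqI[of _ _ "Sp 0"])
  moreover have "infdist (rv z) (rv ` RY 0 \<omega> m) < (real L + 1) * s" if z: "z \<in> RX 0 \<omega> m" for z
  proof -
    obtain v where v: "v \<in> verts \<omega>" "rank \<omega> v \<le> m" "z = pos 0 \<omega> v"
      using z unfolding RX_def visited_def by auto
    show ?thesis
    proof (cases "v \<in> Yset \<omega>")
      case True
      then have "z \<in> RY 0 \<omega> m" unfolding RY_def visited_def using v by auto
      then show ?thesis using s by (simp add: infdist_zero)
    next
      case False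
      then obtain n where n: "v = Sp n" "1 \<le> n" using v(1) unfolding Yset_def by auto
      then have "n \<le> m" using spine_index_le_rank[OF finite_subtrees, of v] v by simp
      then obtain y where y: "y \<in> Yset \<omega>" "rank \<omega> y \<le> rank \<omega> (Sp n)"
          "dist (rv (pos 0 \<omega> (Sp n))) (rv (pos 0 \<omega> y)) < (real L + 1) * s"
        using Sp_close_to_Yset[OF finite_subtrees n(2) _ s] good n by blast
      then have "pos 0 \<omega> y \<in> RY 0 \<omega> m"
        unfolding RY_def visited_def using v n by (auto simp: Yset_def)
      then have "infdist (rv z) (rv ` RY 0 \<omega> m) \<le> dist (rv z) (rv (pos 0 \<omega> y))"
        by (intro infdist_le) auto
      then show ?thesis using y v n by simp
    qed
  qed
  ultimately show ?thesis by (subst Max_less_iff) auto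
qed

lemma unbounded_subtree_or_spine_bad_if_far:
  fixes \<omega> :: "'d::finite bt_omega"
  assumes t: "t > 0" and far: "t \<le> Max ((\<lambda>z. infdist (rv z) (rv ` RY 0 \<omega> m)) ` RX 0 \<omega> m)"
  shows "(\<exists>a. unbounded_subtree \<omega> a) \<or> (\<exists>n\<in>{1..m}. spine_bad L (t / (real L + 1)) n \<omega>)"
proof (rule ccontr)
  assume neg: "\<not> ?thesis"
  then have "finite {w. in_sub \<omega> a w}" for a using finite_in_sub_if_bounded by blast
  moreover have "\<forall>n. 1 \<le> n \<and> n \<le> m \<longrightarrow> \<not> spine_bad L (t / (real L + 1)) n \<omega>"
    using neg by auto
  ultimately have "Max ((\<lambda>z. infdist (rv z) (rv ` RY 0 \<omega> m)) ` RX 0 \<omega> m) < (real L + 1) * (t / (real L + 1))"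
    using t by (intro max_infdist_RX_RY_less) auto
  then show False using far by simp
qed

section \<open>A union bound over the explored spine vertices\<close>

lemma prob_no_left_children_le:
  assumes mean: "measure_pmf.expectation \<mu> real = 1" and K: "K \<ge> 2"
  shows "measure (pair_pmf (spine_pmf \<mu>) \<theta>) {x. fst (fst x) = 0} \<le> 1 - pmf \<mu> K"
proof -
  have "measure (pair_pmf (spine_pmf \<mu>) \<theta>) {x. fst (fst x) = 0}
      = measure (map_pmf fst (pair_pmf (spine_pmf \<mu>) \<theta>)) {y. fst y = 0}"
    by (simp add: vimage_def)
  also have "\<dots> = measure (spine_pmf \<mu>) {y. fst y = 0}" by (simp add: map_fst_pair_pmf)
  finally have "measure (pair_pmf (spine_pmf \<mu>) \<theta>) {x. fst (fst x) = 0}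
      = measure (spine_pmf \<mu>) {y. fst y = 0}" .
  moreover have "measure (spine_pmf \<mu>) ({y. fst y = 0} \<union> {(K - 1, 0)})
      = measure (spine_pmf \<mu>) {y. fst y = 0} + measure (spine_pmf \<mu>) {(K - 1, 0)}"
    using K by (intro measure_pmf.finite_measure_Union) auto
  moreover have "measure (spine_pmf \<mu>) ({y. fst y = 0} \<union> {(K - 1, 0)}) \<le> 1"
    by (rule measure_pmf.prob_le_1)
  moreover have "measure (spine_pmf \<mu>) {(K - 1, 0)} = pmf \<mu> K"
    using K by (simp add: measure_pmf_single pmf_spine_pmf[OF mean])
  ultimately show ?thesis by simp
qed

lemma prob_no_left_children_le_power:
  assumes mean: "measure_pmf.expectation \<mu> real = 1" and K: "K \<ge> 2" and J: "finite J"
  shows "measure (bt_space \<mu> \<theta>) {\<omega> \<in> space (bt_space \<mu> \<theta>). \<forall>k\<in>J. Lc \<omega> k = 0}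
           \<le> (1 - pmf \<mu> K) ^ card J"
proof -
  have "measure (bt_space \<mu> \<theta>) {\<omega> \<in> space (bt_space \<mu> \<theta>). \<forall>k\<in>J. Lc \<omega> k = 0}
      = measure (pair_pmf (spine_pmf \<mu>) \<theta>) {x. fst (fst x) = 0} ^ card J"
    using prob_spine_cylinder[OF J, of \<mu> \<theta> "\<lambda>x. fst (fst x) = 0"] by (simp add: Lc_def)
  also have "\<dots> \<le> (1 - pmf \<mu> K) ^ card J"
    by (intro power_mono prob_no_left_children_le[OF mean K] measure_nonneg)
  finally show ?thesis .
qed

lemma prob_spine_bad_le:
  fixes \<theta> :: "(int ^ 'd::finite) pmf"
  assumes mean: "measure_pmf.expectation \<mu> real = 1" and K: "K \<ge> 2"
    and tail: "measure \<theta> {y. s \<le> norm (rv y)} \<le> B"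
  shows "measure (bt_space \<mu> \<theta>) {\<omega> \<in> space (bt_space \<mu> \<theta>). spine_bad L s n \<omega>}
           \<le> (1 - pmf \<mu> K) ^ L + (2 * real L + 1) * B"
proof -
  let ?O = "bt_space \<mu> \<theta>"
  interpret O: prob_space ?O by (rule prob_space_bt_space)
  define Z where "Z = {\<omega> \<in> space ?O. L < n \<and> (\<forall>k\<in>{n-L..<n}. Lc \<omega> k = 0)}"
  define D where "D j = {\<omega> \<in> space ?O. s \<le> norm (rv (Dsp \<omega> j))}" for j
  define T where "T k = {\<omega> \<in> space ?O. s \<le> norm (rv (Dtr \<omega> k [0]))}" for k
  have Z_sets: "Z \<in> sets ?O" unfolding Z_def by measurable
  have D_sets: "D j \<in> sets ?O" for j unfolding D_def by measurable
  have T_sets: "T k \<in> sets ?O" for k unfolding T_def by measurable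
  have B: "0 \<le> B" using tail measure_nonneg order_trans by blast
  have "{\<omega> \<in> space ?O. spine_bad L s n \<omega>} \<subseteq> Z \<union> (\<Union>j\<in>{n-L..n}. D j) \<union> (\<Union>k\<in>{n-L..<n}. T k)"
    unfolding spine_bad_def Z_def D_def T_def by auto
  then have "O.prob {\<omega> \<in> space ?O. spine_bad L s n \<omega>}
      \<le> O.prob (Z \<union> (\<Union>j\<in>{n-L..n}. D j) \<union> (\<Union>k\<in>{n-L..<n}. T k))"
    using Z_sets D_sets T_sets by (intro O.finite_measure_mono) auto
  also have "\<dots> \<le> O.prob (Z \<union> (\<Union>j\<in>{n-L..n}. D j)) + O.prob (\<Union>k\<in>{n-L..<n}. T k)"
    using Z_sets D_sets T_sets by (intro measure_Un_le) auto
  also have "\<dots> \<le> O.prob Z + O.prob (\<Union>j\<in>{n-L..n}. D j) + O.prob (\<Union>k\<in>{n-L..<n}. T k)"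
    using Z_sets D_sets measure_Un_le[of Z ?O "\<Union>j\<in>{n-L..n}. D j"] by auto
  also have "O.prob Z \<le> (1 - pmf \<mu> K) ^ L"
  proof (cases "L < n")
    case True
    then show ?thesis
      using prob_no_left_children_le_power[OF mean K, of "{n-L..<n}" \<theta>] by (simp add: Z_def)
  qed (use pmf_le_1[of \<mu> K] in \<open>simp add: Z_def\<close>)
  also have "O.prob (\<Union>j\<in>{n-L..n}. D j) \<le> real (card {n-L..n}) * B"
    using D_sets tail by (intro O.finite_measure_UN_le_card_mult) (auto simp: D_def prob_Dsp_tail)
  also have "O.prob (\<Union>k\<in>{n-L..<n}. T k) \<le> real (card {n-L..<n}) * B"
    using T_sets tail by (intro O.finite_measure_UN_le_card_mult) (auto simp: T_def prob_Dtr_tail)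
  finally have "O.prob {\<omega> \<in> space ?O. spine_bad L s n \<omega>}
      \<le> (1 - pmf \<mu> K) ^ L + real (card {n-L..n}) * B + real (card {n-L..<n}) * B"
    by simp
  moreover have "real (card {n-L..n}) * B \<le> (real L + 1) * B" using B by (intro mult_right_mono) auto
  moreover have "real (card {n-L..<n}) * B \<le> real L * B" using B by (intro mult_right_mono) auto
  ultimately show ?thesis by (simp add: algebra_simps)
qed

lemma (in finite_measure) measure_le_measure_superset:
  assumes "A \<subseteq> S" "S \<in> sets M"
  shows "measure M A \<le> measure M S"
  using assms finite_measure_mono[of A S] measure_notin_sets[of A M] by (cases "A \<in> sets M") auto

lemma (in critical_offspring) prob_max_infdist_ge_le:
  fixes \<theta> :: "(int ^ 'd::finite) pmf"
  assumes K: "K \<ge> 2" and t: "t > 0"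
    and tail: "measure \<theta> {y. t / (real L + 1) \<le> norm (rv y)} \<le> B"
  shows "measure (bt_space \<mu> \<theta>)
       {\<omega> \<in> space (bt_space \<mu> \<theta>). Max ((\<lambda>z. infdist (rv z) (rv ` RY 0 \<omega> m)) ` RX 0 \<omega> m) \<ge> t}
      \<le> real m * ((1 - pmf \<mu> K) ^ L + (2 * real L + 1) * B)"
proof -
  let ?O = "bt_space \<mu> \<theta>"
  interpret O: prob_space ?O by (rule prob_space_bt_space)
  define s where "s = t / (real L + 1)"
  define N where "N = {\<omega> \<in> space ?O. \<exists>a. unbounded_subtree \<omega> a}"
  have N_null: "N \<in> null_sets ?O"
  proof -
    have "N = (\<Union>a. {\<omega> \<in> space ?O. unbounded_subtree \<omega> a})" unfolding N_def by auto
    then show ?thesis using unbounded_subtree_null by auto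
  qed
  define Bad where "Bad n = {\<omega> \<in> space ?O. spine_bad L s n \<omega>}" for n
  have Bad_sets: "Bad n \<in> sets ?O" for n
  proof -
    have "Measurable.pred ?O (\<lambda>\<omega>. spine_bad L s n \<omega>)" unfolding spine_bad_def by measurable
    then show ?thesis unfolding Bad_def by (simp add: pred_def)
  qed
  have "{\<omega> \<in> space ?O. Max ((\<lambda>z. infdist (rv z) (rv ` RY 0 \<omega> m)) ` RX 0 \<omega> m) \<ge> t}
      \<subseteq> N \<union> (\<Union>n\<in>{1..m}. Bad n)"
    using unbounded_subtree_or_spine_bad_if_far[OF t] by (fastforce simp: N_def Bad_def s_def)
  then have "O.prob {\<omega> \<in> space ?O. Max ((\<lambda>z. infdist (rv z) (rv ` RY 0 \<omega> m)) ` RX 0 \<omega> m) \<ge> t}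
      \<le> O.prob (N \<union> (\<Union>n\<in>{1..m}. Bad n))"
    using N_null Bad_sets by (intro O.measure_le_measure_superset) auto
  also have "\<dots> = O.prob (\<Union>n\<in>{1..m}. Bad n)"
    using N_null Bad_sets by (subst Un_commute, intro measure_Un_null_set) auto
  also have "\<dots> \<le> real (card {1..m}) * ((1 - pmf \<mu> K) ^ L + (2 * real L + 1) * B)"
    unfolding Bad_def using Bad_sets tail
    by (intro O.finite_measure_UN_le_card_mult prob_spine_bad_le[OF mean K]) (auto simp: s_def Bad_def)
  finally show ?thesis by simp
qed

section \<open>Choosing \<open>L\<close> of order \<open>log m\<close>\<close>

lemma power_le_powr_if_log_le:
  fixes p m A q' :: real
  assumes p: "0 < p" "p < 1" and m: "0 < m" and A: "A = (q' / 4) / (- ln p)"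
    and L: "A * ln m \<le> real L"
  shows "p ^ L \<le> m powr (- q' / 4)"
proof -
  have "p ^ L = exp (real L * ln p)" using p by (simp add: exp_of_nat_mult)
  also have "\<dots> \<le> exp (A * ln m * ln p)"
    using L p by (simp add: mult_right_mono_neg)
  also have "A * ln m * ln p = - (q' / 4) * ln m"
    using p by (simp add: A field_simps)
  also have "exp (- (q' / 4) * ln m) = m powr (- q' / 4)" using m by (simp add: powr_def)
  finally show ?thesis .
qed

lemma tail_sum_le_powr:
  fixes m t A q q' \<delta> Kc :: real
  assumes m: "0 < m" and lm: "1 \<le> ln m" and A: "0 < A" and L: "real L \<le> A * ln m + 1"
    and q': "0 < q'" "q' < q" and \<delta>: "\<delta> = (q - q') / q'" and Kc: "Kc = (2 * A + 3) * (A + 2) powr q"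
    and t: "0 < t" "m < t powr q'" and small: "ln m powr (q + 1) * m powr (- \<delta>) \<le> 1 / Kc"
  shows "(2 * real L + 1) * (t / (real L + 1)) powr (- q) \<le> t powr (- q')"
proof -
  have "(t / (real L + 1)) powr (- q) = (real L + 1) powr q * t powr (- q)"
  proof -
    have "(t / (real L + 1)) powr (- q) = t powr (- q) / (real L + 1) powr (- q)"
      by (rule powr_divide)
    moreover have "(real L + 1) powr (- q) = inverse ((real L + 1) powr q)" by (rule powr_minus)
    moreover have "(real L + 1) powr q > 0" by simp
    ultimately show ?thesis by (simp add: divide_inverse)
  qed
  moreover have "t powr (- q) = t powr (- q') * t powr (- (q - q'))"
    using powr_add[of t "- q'" "- (q - q')"] by simp
  ultimately have split:
    "(t / (real L + 1)) powr (- q) = (real L + 1) powr q * t powr (- q') * t powr (- (q - q'))"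
    by simp
  have decay: "t powr (- (q - q')) \<le> m powr (- \<delta>)"
  proof -
    have "m powr \<delta> \<le> (t powr q') powr \<delta>" using t m q' \<delta> by (intro powr_mono2) auto
    also have "\<dots> = t powr (q - q')" using q' by (simp add: \<delta> powr_powr)
    finally have "inverse (t powr (q - q')) \<le> inverse (m powr \<delta>)"
      using m by (intro le_imp_inverse_le) auto
    then show ?thesis by (simp only: powr_minus)
  qed
  have poly: "(2 * real L + 1) * (real L + 1) powr q \<le> Kc * ln m powr (q + 1)"
  proof -
    have "real L + 1 \<le> (A + 2) * ln m" using L lm by (simp add: algebra_simps)
    then have "(real L + 1) powr q \<le> (A + 2) powr q * ln m powr q"
      using A lm q' by (subst powr_mult[symmetric]) (auto intro!: powr_mono2)
    moreover have "2 * real L + 1 \<le> (2 * A + 3) * ln m" using L lm by (simp add: algebra_simps)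
    ultimately have "(2 * real L + 1) * (real L + 1) powr q
        \<le> ((2 * A + 3) * ln m) * ((A + 2) powr q * ln m powr q)"
      by (intro mult_mono) auto
    also have "\<dots> = Kc * ln m powr (q + 1)"
      using lm by (simp add: Kc powr_add algebra_simps)
    finally show ?thesis .
  qed
  have "0 < Kc" using A by (simp add: Kc)
  have "(2 * real L + 1) * (t / (real L + 1)) powr (- q)
      = t powr (- q') * (((2 * real L + 1) * (real L + 1) powr q) * t powr (- (q - q')))"
    unfolding split by (simp add: algebra_simps)
  also have "\<dots> \<le> t powr (- q') * ((Kc * ln m powr (q + 1)) * m powr (- \<delta>))"
    using \<open>0 < Kc\<close> by (intro mult_left_mono mult_mono[OF poly decay]) auto
  also have "\<dots> \<le> t powr (- q') * (Kc * (1 / Kc))"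
  proof -
    have "Kc * (ln m powr (q + 1) * m powr (- \<delta>)) \<le> Kc * (1 / Kc)"
      using small \<open>0 < Kc\<close> by (intro mult_left_mono) auto
    then show ?thesis by (intro mult_left_mono) (auto simp: mult.assoc)
  qed
  finally show ?thesis using \<open>0 < Kc\<close> by simp
qed

text \<open>If \<open>t powr q' \<le> m * ln m powr (q' / 2)\<close> with \<open>t = \<eta> m\<^sup>1\<^sup>/\<^sup>4\<close>, the claimed bound
  exceeds 1; otherwise both terms of the union bound are at most \<open>m * t powr (- q')\<close>.\<close>
lemma union_bound_le_rate:
  fixes m \<eta> P c q q' p A \<delta> Kc :: real and L :: nat
  assumes m: "1 \<le> m" and lm: "1 \<le> ln m" and \<eta>: "0 < \<eta>" "\<eta> < 1"
    and P1: "P \<le> 1"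
    and P: "P \<le> m * (p ^ L + (2 * real L + 1) * (c * (\<eta> * m powr (1/4) / (real L + 1)) powr (- q)))"
    and c: "0 \<le> c" and q': "4 < q'" "q' < q" and p: "0 < p" "p < 1"
    and A: "A = (q' / 4) / (- ln p)" and L: "A * ln m \<le> real L" "real L \<le> A * ln m + 1"
    and \<delta>: "\<delta> = (q - q') / q'" and Kc: "Kc = (2 * A + 3) * (A + 2) powr q"
    and small: "ln m powr (q + 1) * m powr (- \<delta>) \<le> 1 / Kc"
  shows "P \<le> (c + 2) * \<eta> powr (- q') * m powr (1 - q' / 4) * ln m powr (q' / 2)"
proof -
  define t where "t = \<eta> * m powr (1/4)"
  define W where "W = m * t powr (- q') * ln m powr (q' / 2)"
  have t: "0 < t" using \<eta> m by (simp add: t_def)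
  have log_pow: "1 \<le> ln m powr (q' / 2)" using lm q' by (intro ge_one_powr_ge_zero) auto
  have t_pow: "t powr (- q') = \<eta> powr (- q') * m powr (- q' / 4)"
    using \<eta> m by (simp add: t_def powr_mult powr_powr)
  have "m powr (1 + (- q' / 4)) = m powr 1 * m powr (- q' / 4)" by (rule powr_add)
  then have "m powr (1 - q' / 4) = m * m powr (- q' / 4)" using m by simp
  then have rate: "(c + 2) * \<eta> powr (- q') * m powr (1 - q' / 4) * ln m powr (q' / 2) = (c + 2) * W"
    unfolding W_def t_pow by (simp add: algebra_simps)
  have W: "0 < W" unfolding W_def using m t log_pow by (intro mult_pos_pos) auto
  show ?thesis
  proof (cases "t powr q' \<le> m * ln m powr (q' / 2)")
    case True
    have "t powr q' * t powr (- q') = 1" using t by (simp add: powr_minus)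
    then have "1 \<le> m * ln m powr (q' / 2) * t powr (- q')"
      using mult_right_mono[OF True, of "t powr (- q')"] by simp
    then have "1 \<le> W" unfolding W_def by (simp add: algebra_simps)
    moreover have "1 * W \<le> (c + 2) * W" using c W by (intro mult_right_mono) auto
    ultimately show ?thesis using P1 rate by linarith
  next
    case False
    moreover have "m * 1 \<le> m * ln m powr (q' / 2)" using log_pow m by (intro mult_left_mono) auto
    ultimately have big: "m < t powr q'" by simp
    have "ln p < 0" using p by simp
    then have A_pos: "0 < A" unfolding A using q' by (intro divide_pos_pos) auto
    have "m * p ^ L \<le> m * t powr (- q')"
    proof -
      have "p ^ L \<le> m powr (- q' / 4)"
        using power_le_powr_if_log_le[OF p _ A L(1)] m by simp
      also have "\<dots> \<le> t powr (- q')"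
      proof -
        have "\<eta> powr (- q') \<ge> 1" using \<eta> q' by (simp add: powr_minus one_le_inverse powr_le1)
        then show ?thesis unfolding t_pow using m by (simp add: mult_le_cancel_right1)
      qed
      finally show ?thesis using m by simp
    qed
    also have "\<dots> \<le> W" unfolding W_def using log_pow m t by simp
    finally have geometric: "m * p ^ L \<le> W" .
    have "m * ((2 * real L + 1) * (c * (t / (real L + 1)) powr (- q)))
        = c * (m * ((2 * real L + 1) * (t / (real L + 1)) powr (- q)))" by (simp add: algebra_simps)
    also have "\<dots> \<le> c * (m * t powr (- q'))"
      using tail_sum_le_powr[OF _ lm A_pos L(2) _ q'(2) \<delta> Kc t big small] q' m c
      by (intro mult_left_mono) auto
    also have "\<dots> \<le> c * W" unfolding W_def using log_pow m t c by (simp add: mult_left_mono)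
    finally have tail: "m * ((2 * real L + 1) * (c * (t / (real L + 1)) powr (- q))) \<le> c * W" .
    have "P \<le> m * p ^ L + m * ((2 * real L + 1) * (c * (t / (real L + 1)) powr (- q)))"
      using P by (simp add: t_def algebra_simps)
    also have "\<dots> \<le> (c + 2) * W" using geometric tail W by (simp add: algebra_simps)
    finally have "P \<le> (c + 2) * W" .
    then show ?thesis by (subst rate)
  qed
qed

lemma eventually_log_powr_small:
  fixes r d C :: real
  assumes "0 < r" "0 < d" "0 < C"
  obtains m0 :: nat where "1 \<le> m0"
    "\<And>m. m0 \<le> m \<Longrightarrow> 1 \<le> ln (real m) \<and> ln (real m) powr r * real m powr (- d) \<le> C"
proof -
  have "((\<lambda>x. ln x powr r * x powr (- d)) \<longlongrightarrow> 0) at_top" using assms by real_asymp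
  then have "\<forall>\<^sub>F x in at_top. ln x powr r * x powr (- d) < C" using assms by (intro order_tendstoD)
  moreover have "\<forall>\<^sub>F x in at_top. 1 \<le> ln (x :: real)" by real_asymp
  ultimately have "\<forall>\<^sub>F m in sequentially. 1 \<le> ln (real m) \<and> ln (real m) powr r * real m powr (- d) \<le> C"
    by (auto elim: eventually_mono intro!: eventually_compose_filterlim[OF _ filterlim_real_sequentially]
        eventually_conj)
  moreover have "\<forall>\<^sub>F m in sequentially. 1 \<le> (m::nat)" by simp
  ultimately obtain m0 where "\<And>m. m0 \<le> m \<Longrightarrow> 1 \<le> m \<and> 1 \<le> ln (real m) \<and> ln (real m) powr r * real m powr (- d) \<le> C"
    unfolding eventually_sequentially by (metis (mono_tags, lifting) eventually_conj eventually_sequentially)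
  then show ?thesis using that[of m0] by blast
qed

lemma (in critical_offspring) prob_max_infdist_ge_le_rate:
  fixes \<theta> :: "(int ^ 'd::finite) pmf" and m :: nat
  assumes K: "K \<ge> 2" and p: "0 < p" "p < 1" "1 - pmf \<mu> K \<le> p"
    and c: "\<And>r. r > 0 \<Longrightarrow> measure \<theta> {y. norm (rv y) \<ge> r} \<le> c * r powr (- q)"
    and q': "4 < q'" "q' < q" and A: "A = (q' / 4) / (- ln p)"
    and \<delta>: "\<delta> = (q - q') / q'" and Kc: "Kc = (2 * A + 3) * (A + 2) powr q"
    and m: "1 \<le> m" "1 \<le> ln (real m)" "ln (real m) powr (q + 1) * real m powr (- \<delta>) \<le> 1 / Kc"
    and \<eta>: "0 < \<eta>" "\<eta> < 1"
  shows "measure (bt_space \<mu> \<theta>) {\<omega> \<in> space (bt_space \<mu> \<theta>).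
          Max ((\<lambda>z. infdist (rv z) (rv ` RY 0 \<omega> m)) ` RX 0 \<omega> m) \<ge> \<eta> * real m powr (1/4)}
     \<le> (c + 2) * \<eta> powr (- q') * real m powr (1 - q' / 4) * ln (real m) powr (q' / 2)"
proof -
  define L where "L = nat \<lceil>A * ln (real m)\<rceil>"
  define B where "B = c * (\<eta> * real m powr (1/4) / (real L + 1)) powr (- q)"
  have "0 \<le> c" using order_trans[OF measure_nonneg c[of 1]] by simp
  have "ln p < 0" using p by simp
  then have "0 \<le> A * ln (real m)" unfolding A using q' m by (simp add: divide_nonneg_neg)
  then have L: "A * ln (real m) \<le> real L" "real L \<le> A * ln (real m) + 1"
    unfolding L_def by linarith+
  have t: "0 < \<eta> * real m powr (1/4)" using \<eta> m by simp
  have "measure (bt_space \<mu> \<theta>) {\<omega> \<in> space (bt_space \<mu> \<theta>).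
          Max ((\<lambda>z. infdist (rv z) (rv ` RY 0 \<omega> m)) ` RX 0 \<omega> m) \<ge> \<eta> * real m powr (1/4)}
      \<le> real m * ((1 - pmf \<mu> K) ^ L + (2 * real L + 1) * B)"
    unfolding B_def by (rule prob_max_infdist_ge_le[OF K t c[OF divide_pos_pos[OF t]]]) simp
  also have "\<dots> \<le> real m * (p ^ L + (2 * real L + 1) * B)"
    using p pmf_le_1[of \<mu> K] by (intro mult_left_mono add_right_mono power_mono) auto
  finally show ?thesis
    unfolding B_def using m
    by (intro union_bound_le_rate[OF _ _ \<eta> prob_space.prob_le_1[OF prob_space_bt_space] _
          \<open>0 \<le> c\<close> q' p(1,2) A L \<delta> Kc]) auto
qed

theorem mainTheorem8:
  fixes \<mu> :: "nat pmf" and \<theta> :: "(int ^ 'd) pmf" and q q' :: real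
  assumes mean: "measure_pmf.expectation \<mu> real = 1"
    and var_fin: "integrable (measure_pmf \<mu>) (\<lambda>k. (real k)^2)"
    and var_pos: "measure_pmf.variance \<mu> real > 0"
    and sym: "\<forall>y. pmf \<theta> (- y) = pmf \<theta> y"
    and irr: "brw_irreducible \<theta>"
    and tail: "\<exists>c. \<forall>r>0. measure_pmf.prob \<theta> {y. norm (rv y) \<ge> r} \<le> c * r powr (- q)"
    and q: "q > 4" and q'1: "4 < q'" and q'2: "q' < q"
  shows "\<exists>C'>0. \<exists>m0\<ge>(1::nat). \<forall>m\<ge>m0. \<forall>\<eta>::real. 0 < \<eta> \<and> \<eta> < 1 \<longrightarrow>
     measure (bt_space \<mu> \<theta>)
       {\<omega> \<in> space (bt_space \<mu> \<theta>).
          Max ((\<lambda>z. infdist (rv z) (rv ` RY 0 \<omega> m)) ` RX 0 \<omega> m) \<ge> \<eta> * real m powr (1/4)}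
     \<le> C' * \<eta> powr (- q') * real m powr (1 - q' / 4) * ln (real m) powr (q' / 2)"
proof -
  interpret critical_offspring \<mu> using mean var_pos by unfold_locales
  obtain K where K: "K \<ge> 2" "pmf \<mu> K > 0" using exists_pmf_pos_ge_2 by auto
  obtain c where c: "\<And>r. r > 0 \<Longrightarrow> measure \<theta> {y. norm (rv y) \<ge> r} \<le> c * r powr (- q)"
    using tail by auto
  define p where "p = max (1 - pmf \<mu> K) (1/2)"
  define A where "A = (q' / 4) / (- ln p)"
  define \<delta> where "\<delta> = (q - q') / q'"
  define Kc where "Kc = (2 * A + 3) * (A + 2) powr q"
  have p: "0 < p" "p < 1" "1 - pmf \<mu> K \<le> p" using K by (auto simp: p_def)
  then have "0 < A" unfolding A_def using q'1 by (intro divide_pos_pos) auto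
  then have "0 < 1 / Kc" "0 < \<delta>" using q'1 q'2 by (simp_all add: Kc_def \<delta>_def)
  then obtain m0 where m0: "1 \<le> m0"
    "\<And>m. m0 \<le> m \<Longrightarrow> 1 \<le> ln (real m) \<and> ln (real m) powr (q + 1) * real m powr (- \<delta>) \<le> 1 / Kc"
    using eventually_log_powr_small[of "q + 1" \<delta> "1 / Kc"] q by auto
  have "0 \<le> c" using order_trans[OF measure_nonneg c[of 1]] by simp
  with m0 show ?thesis
    using prob_max_infdist_ge_le_rate[OF K(1) p c q'1 q'2 A_def \<delta>_def Kc_def]
    by (intro exI[of _ "c + 2"] exI[of _ m0]) (auto intro: order_trans[of _ m0])
qed

end
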